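(* Let $t_0>0$. A tame power series $\alpha$ is uniquely determined by the sequence of values $B_\alpha[n;t_0]$, $n\ge0$: if $\alpha,\alpha'$ are tame power series with $B_\alpha[n;t_0]=B_{\alpha'}[n;t_0]$ for all $n\ge0$, then $\alpha=\alpha'$.
   Context: A power series $\alpha(z)=\sum_{n\ge0}a_{n+1}z^n$ is tame if it converges on the open unit disk, extends holomorphically to a punctured neighborhood of $z=1$ with a pole of order $\nu\ge0$ at $1$ ($\nu=0$ meaning holomorphic at $1$), and $(z-1)^\nu\alpha(z)$ equals, on an open neighborhood of $(0,1]$, a multi-power series $\sum_{\mathbf i\in\mathbb Z^N_{\ge0}}c_{\mathbf i}\prod_{j=1}^N(z^{e_j}-1)^{i_j}$ (some $N\ge1$, $e_j\in\mathbb Z_{>0}$) converging absolutely and uniformly there. Bernoulli polynomials of a tame $\alpha$ with pole order $\nu$ (each series uses its own $\nu$): $\sum_{n\ge0}B_\alpha[n;t]\frac{u^n}{n!}=(-u)^\nu\alpha(e^u)e^{tu}$ near $u=0$. *)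

theory Defs
  imports "HOL-Analysis.Analysis"
begin

text \<open>A power series alpha(z) = sum_{n>=0} a_{n+1} z^n is represented by its
coefficient sequence c, with c n = a_{n+1}.\<close>

definition pseries :: "(nat \<Rightarrow> complex) \<Rightarrow> complex \<Rightarrow> complex" where
  "pseries c z = (\<Sum>n. c n * z ^ n)"

definition multi_power_repr :: "(complex \<Rightarrow> complex) \<Rightarrow> complex set \<Rightarrow> bool" where
  "multi_power_repr H D \<longleftrightarrow>
     (\<exists>V (N::nat) (e::nat \<Rightarrow> nat) (coef::(nat \<Rightarrow> nat) \<Rightarrow> complex).
        open V \<and> complex_of_real ` {0<..1} \<subseteq> V \<and> V \<subseteq> D \<and>
        N \<ge> 1 \<and> (\<forall>j<N. e j > 0) \<and>
        (let I = {i::nat \<Rightarrow> nat. \<forall>j\<ge>N. i j = 0};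
             term = (\<lambda>i z. coef i * (\<Prod>j<N. (z ^ e j - 1) ^ i j))
         in (\<forall>z\<in>V. (\<lambda>i. norm (term i z)) summable_on I \<and>
                     ((\<lambda>i. term i z) has_sum H z) I) \<and>
            uniform_limit V (\<lambda>F z. \<Sum>i\<in>F. term i z) H (finite_subsets_at_top I)))"

text \<open>tame_data c nu A: the series c converges on the open unit disk, A agrees with
it there and is its holomorphic extension to a punctured neighbourhood ball 1 r - {1}
of 1, with a pole of order nu at 1 (nu = 0: holomorphic at 1), expressed by:
z \<mapsto> (z-1)^nu A(z), with value L at z = 1, is holomorphic on the unit disk
union ball 1 r, and L \<noteq> 0 if nu > 0.  Moreover (z-1)^nu alpha(z) has a
multi-power series representation near (0,1].\<close>

definition tame_data :: "(nat \<Rightarrow> complex) \<Rightarrow> nat \<Rightarrow> (complex \<Rightarrow> complex) \<Rightarrow> bool" where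
  "tame_data c \<nu> A \<longleftrightarrow>
     (\<forall>z. norm z < 1 \<longrightarrow> summable (\<lambda>n. c n * z ^ n)) \<and>
     (\<forall>z\<in>ball 0 1. A z = pseries c z) \<and>
     (\<exists>r>0. \<exists>L.
        (\<lambda>z. if z = 1 then L else (z - 1) ^ \<nu> * A z) holomorphic_on (ball 0 1 \<union> ball 1 r) \<and>
        (\<nu> = 0 \<or> L \<noteq> 0) \<and>
        multi_power_repr (\<lambda>z. if z = 1 then L else (z - 1) ^ \<nu> * A z) (ball 0 1 \<union> ball 1 r))"

definition tame :: "(nat \<Rightarrow> complex) \<Rightarrow> bool" where
  "tame c \<longleftrightarrow> (\<exists>\<nu> A. tame_data c \<nu> A)"

text \<open>B is the sequence of Bernoulli polynomials of alpha evaluated at t: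
sum_n B n u^n / n! = (-u)^nu alpha(e^u) e^{t u} near u = 0 (for u \<noteq> 0, the right-hand
side having a removable singularity at 0).\<close>

definition bernoulli_seq :: "(nat \<Rightarrow> complex) \<Rightarrow> real \<Rightarrow> (nat \<Rightarrow> complex) \<Rightarrow> bool" where
  "bernoulli_seq c t B \<longleftrightarrow>
     (\<exists>\<nu> A. tame_data c \<nu> A \<and>
        (\<exists>\<rho>>0. \<forall>u\<in>ball 0 \<rho> - {0}.
           (\<lambda>n. B n * u ^ n / fact n) sums
             ((- u) ^ \<nu> * A (exp u) * exp (complex_of_real t * u))))"

definition bernoulli_poly :: "(nat \<Rightarrow> complex) \<Rightarrow> nat \<Rightarrow> real \<Rightarrow> complex" where
  "bernoulli_poly c n t = (THE B. bernoulli_seq c t B) n"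

end

theory Submission
  imports Defs "HOL-Complex_Analysis.Complex_Analysis" "HOL-Real_Asymp.Real_Asymp"
begin

text \<open>For small s > 0 the point u = -s lies in the disc of convergence of the Bernoulli generating
  series, which there sums to s^nu alpha(e^-s) e^-ts.  Equal Bernoulli values therefore give
  s^nu alpha(e^-s) = s^nu' alpha'(e^-s) for small s > 0.  Both sides are restrictions of the functions
  (-Ln z)^nu alpha(z), holomorphic on the right half of the unit disc, so the identity persists for
  all s > 0.  As s tends to infinity, each side behaves like s^nu c_m e^-ms, where c_m is the
  lowest nonzero coefficient; since a power of s cannot be balanced by exponentials, nu = nu' (or
  both series vanish), and then alpha = alpha' by the identity theorem for power series.
  The pole order at 1 is determined by alpha, which makes the Bernoulli sequence, and hence
  bernoulli_poly, well defined.\<close>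

lemma lowest_nonzero_index:
  fixes a :: "nat \<Rightarrow> 'a::zero"
  assumes "a \<noteq> (\<lambda>_. 0)"
  obtains m where "a m \<noteq> 0" and "\<And>n. n < m \<Longrightarrow> a n = 0"
proof -
  have ex: "\<exists>n. a n \<noteq> 0"
    using assms by auto
  show ?thesis
    by (rule that[of "LEAST n. a n \<noteq> 0"]) (use LeastI_ex[OF ex] not_less_Least in auto)
qed

lemma powser_eq_power_mult_tail:
  fixes a :: "nat \<Rightarrow> 'a::{real_normed_field,banach}"
  assumes "summable (\<lambda>n. a n * z ^ n)" and "\<And>n. n < m \<Longrightarrow> a n = 0"
  shows "(\<Sum>n. a n * z ^ n) = z ^ m * (\<Sum>n. a (n + m) * z ^ n)"
proof -
  have "(\<Sum>n. a n * z ^ n) = (\<Sum>n. a (n + m) * z ^ (n + m)) + (\<Sum>i<m. a i * z ^ i)"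
    by (rule suminf_split_initial_segment[OF assms(1)])
  also have "(\<Sum>i<m. a i * z ^ i) = 0"
    using assms(2) by simp
  also have "(\<Sum>n. a (n + m) * z ^ (n + m)) = (\<Sum>n. z ^ m * (a (n + m) * z ^ n))"
    by (simp add: power_add algebra_simps)
  also have "\<dots> = z ^ m * (\<Sum>n. a (n + m) * z ^ n)"
    using assms(1) by (intro suminf_mult) (simp add: summable_powser_ignore_initial_segment)
  finally show ?thesis
    by simp
qed

lemma powser_div_power_tendsto_lowest_coeff:
  fixes a :: "nat \<Rightarrow> 'a::{real_normed_field,banach}"
  assumes "summable (\<lambda>n. a n * w ^ n)" and "w \<noteq> 0" and "\<And>n. n < m \<Longrightarrow> a n = 0"
  shows "((\<lambda>z. (\<Sum>n. a n * z ^ n) / z ^ m) \<longlongrightarrow> a m) (at 0)"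
proof -
  have "isCont (\<lambda>z. \<Sum>n. a (n + m) * z ^ n) 0"
    using assms(1,2)
    by (intro isCont_powser[of _ w]) (simp_all add: summable_powser_ignore_initial_segment)
  then have "((\<lambda>z. \<Sum>n. a (n + m) * z ^ n) \<longlongrightarrow> a m) (at 0)"
    by (simp add: isCont_def powser_zero)
  moreover have "eventually (\<lambda>z. z \<in> ball 0 (norm w) \<and> z \<noteq> 0) (at 0)"
    using eventually_at_ball'[of "norm w" 0 UNIV] assms(2) by simp
  then have "eventually (\<lambda>z. (\<Sum>n. a (n + m) * z ^ n) = (\<Sum>n. a n * z ^ n) / z ^ m) (at 0)"
  proof eventually_elim
    case (elim z)
    then have "summable (\<lambda>n. a n * z ^ n)"
      using powser_inside[OF assms(1)] by simp
    then show ?case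
      using powser_eq_power_mult_tail[OF _ assms(3)] elim by simp
  qed
  ultimately show ?thesis
    by (rule Lim_transform_eventually)
qed

lemma powser_eq_0_if_eventually_0:
  fixes a :: "nat \<Rightarrow> 'a::{real_normed_field,banach}"
  assumes "summable (\<lambda>n. a n * w ^ n)" and "w \<noteq> 0"
    and "F \<noteq> bot" and "filterlim g (at 0) F"
    and "eventually (\<lambda>x. (\<Sum>n. a n * g x ^ n) = 0) F"
  shows "a = (\<lambda>_. 0)"
proof (rule ccontr)
  assume "a \<noteq> (\<lambda>_. 0)"
  then obtain m where "a m \<noteq> 0" and low: "\<And>n. n < m \<Longrightarrow> a n = 0"
    using lowest_nonzero_index by blast
  have "((\<lambda>x. (\<Sum>n. a n * g x ^ n) / g x ^ m) \<longlongrightarrow> a m) F"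
    using filterlim_compose[OF powser_div_power_tendsto_lowest_coeff[OF assms(1,2) low] assms(4)] .
  moreover have "((\<lambda>x. (\<Sum>n. a n * g x ^ n) / g x ^ m) \<longlongrightarrow> 0) F"
    using assms(5) by (intro tendsto_eventually) (auto elim: eventually_mono)
  ultimately show False
    using tendsto_unique[OF assms(3)] \<open>a m \<noteq> 0\<close> by metis
qed

lemma powser_eq_if_eventually_eq:
  fixes a b :: "nat \<Rightarrow> 'a::{real_normed_field,banach}"
  assumes "summable (\<lambda>n. a n * w ^ n)" and "summable (\<lambda>n. b n * w ^ n)" and "w \<noteq> 0"
    and "F \<noteq> bot" and g: "filterlim g (at 0) F"
    and "eventually (\<lambda>x. (\<Sum>n. a n * g x ^ n) = (\<Sum>n. b n * g x ^ n)) F"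
  shows "a = b"
proof -
  have summable: "summable (\<lambda>n. (a n - b n) * w ^ n)"
    using summable_diff[OF assms(1,2)] by (simp add: algebra_simps)
  have "(g \<longlongrightarrow> 0) F"
    using g by (simp add: filterlim_at)
  then have "eventually (\<lambda>x. norm (g x) < norm w) F"
    using assms(3) by (intro order_tendstoD(2)[OF tendsto_norm_zero]) auto
  with assms(6) have "eventually (\<lambda>x. (\<Sum>n. (a n - b n) * g x ^ n) = 0) F"
  proof eventually_elim
    case (elim x)
    then show ?case
      using suminf_diff[OF powser_inside[OF assms(1)] powser_inside[OF assms(2)]]
      by (simp add: algebra_simps)
  qed
  then have "(\<lambda>n. a n - b n) = (\<lambda>_. 0)"
    using powser_eq_0_if_eventually_0[OF summable assms(3-5)] by blast
  then show ?thesis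
    by (simp add: fun_eq_iff)
qed

lemma pseries_holomorphic:
  assumes "\<And>z. norm z < 1 \<Longrightarrow> summable (\<lambda>n. c n * z ^ n)"
  shows "pseries c holomorphic_on ball 0 1"
  by (rule power_series_holomorphic[where a = c])
     (use assms in \<open>simp add: pseries_def summable_sums\<close>)

lemma pseries_eq_if_eventually_eq:
  assumes "\<And>z. norm z < 1 \<Longrightarrow> summable (\<lambda>n. c n * z ^ n)"
    and "\<And>z. norm z < 1 \<Longrightarrow> summable (\<lambda>n. c' n * z ^ n)"
    and "F \<noteq> bot" and "filterlim g (at 0) F"
    and "eventually (\<lambda>x. pseries c (g x) = pseries c' (g x)) F"
  shows "c = c'"
  using assms unfolding pseries_def
  by (intro powser_eq_if_eventually_eq[where w = "1/2"]) auto

lemma filterlim_of_real_exp_neg_at_top: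
  "filterlim (\<lambda>s. complex_of_real (exp (- s))) (at 0) at_top"
proof (rule filterlim_atI)
  have "((\<lambda>s::real. exp (- s)) \<longlongrightarrow> 0) at_top"
    by real_asymp
  then show "((\<lambda>s. complex_of_real (exp (- s))) \<longlongrightarrow> 0) at_top"
    using tendsto_of_real by fastforce
qed simp

lemma power_mult_exp_not_tendsto:
  fixes d L :: real
  assumes "k > 0" and "L \<noteq> 0"
  shows "\<not> ((\<lambda>s. s ^ k * exp (d * s)) \<longlongrightarrow> L) at_top"
proof
  assume lim: "((\<lambda>s. s ^ k * exp (d * s)) \<longlongrightarrow> L) at_top"
  show False
  proof (cases "d < 0")
    case True
    then have "((\<lambda>s. s ^ k * exp (d * s)) \<longlongrightarrow> 0) at_top"
      by real_asymp
    with lim assms(2) show False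
      using tendsto_unique trivial_limit_at_top_linorder by blast
  next
    case False
    have "filterlim (\<lambda>s::real. s ^ k) at_top at_top"
      using assms(1) by real_asymp
    moreover have "eventually (\<lambda>s::real. s ^ k \<le> s ^ k * exp (d * s)) at_top"
      using eventually_ge_at_top[of 0]
    proof eventually_elim
      case (elim s)
      then have "1 \<le> exp (d * s)"
        using False by simp
      then show ?case
        using mult_left_mono[of 1 "exp (d * s)" "s ^ k"] elim by simp
    qed
    ultimately have "filterlim (\<lambda>s. s ^ k * exp (d * s)) at_top at_top"
      by (rule filterlim_at_top_mono)
    with lim show False
      by (meson filterlim_at_top_imp_at_infinity not_tendsto_and_filterlim_at_infinity
          trivial_limit_at_top_linorder)
  qed
qed

lemma pseries_exp_neg_div_tendsto_lowest_coeff: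
  assumes "\<And>z. norm z < 1 \<Longrightarrow> summable (\<lambda>n. c n * z ^ n)" and "\<And>n. n < m \<Longrightarrow> c n = 0"
  shows "((\<lambda>s. pseries c (of_real (exp (- s))) / of_real (exp (- s)) ^ m) \<longlongrightarrow> c m) at_top"
proof -
  have "((\<lambda>z. (\<Sum>n. c n * z ^ n) / z ^ m) \<longlongrightarrow> c m) (at 0)"
    by (rule powser_div_power_tendsto_lowest_coeff[OF assms(1)[of "1/2"] _ assms(2)]) simp_all
  from filterlim_compose[OF this filterlim_of_real_exp_neg_at_top] show ?thesis
    by (simp add: pseries_def)
qed

lemma pseries_eq_0_if_exp_neg_eventually_0:
  assumes "\<And>z. norm z < 1 \<Longrightarrow> summable (\<lambda>n. c n * z ^ n)"
    and "eventually (\<lambda>s. pseries c (of_real (exp (- s))) = 0) at_top"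
  shows "c = (\<lambda>_. 0)"
  using assms unfolding pseries_def
  by (intro powser_eq_0_if_eventually_0[where w = "1/2", OF _ _ _ filterlim_of_real_exp_neg_at_top])
     auto

text \<open>If both series are nonzero, with lowest nonzero coefficients \<open>c m\<close> and \<open>c' m'\<close>, the
  relation forces \<open>s ^ k * exp ((m' - m) * s)\<close> to converge to \<open>norm (c' m' / c m) \<noteq> 0\<close>.\<close>

lemma nonzero_pseries_exp_neg_not_power_multiple:
  assumes sc: "\<And>z. norm z < 1 \<Longrightarrow> summable (\<lambda>n. c n * z ^ n)"
    and sc': "\<And>z. norm z < 1 \<Longrightarrow> summable (\<lambda>n. c' n * z ^ n)"
    and "c \<noteq> (\<lambda>_. 0)" and "c' \<noteq> (\<lambda>_. 0)" and "k > 0"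
    and rel: "eventually (\<lambda>s::real. pseries c' (of_real (exp (- s)))
                                  = of_real s ^ k * pseries c (of_real (exp (- s)))) at_top"
  shows False
proof -
  define g where "g s = complex_of_real (exp (- s))" for s
  obtain m where "c m \<noteq> 0" and low: "\<And>n. n < m \<Longrightarrow> c n = 0"
    using lowest_nonzero_index assms(3) by blast
  obtain m' where "c' m' \<noteq> 0" and low': "\<And>n. n < m' \<Longrightarrow> c' n = 0"
    using lowest_nonzero_index assms(4) by blast
  define Q where "Q s = pseries c (g s) / g s ^ m" for s
  define Q' where "Q' s = pseries c' (g s) / g s ^ m'" for s
  have lim_Q: "(Q \<longlongrightarrow> c m) at_top"
    using pseries_exp_neg_div_tendsto_lowest_coeff[OF sc low] by (simp add: Q_def[abs_def] g_def)
  have lim_Q': "(Q' \<longlongrightarrow> c' m') at_top"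
    using pseries_exp_neg_div_tendsto_lowest_coeff[OF sc' low'] by (simp add: Q'_def[abs_def] g_def)
  have "eventually (\<lambda>s. norm (Q' s / Q s) = s ^ k * exp ((real m' - real m) * s)) at_top"
    using rel tendsto_imp_eventually_ne[OF lim_Q \<open>c m \<noteq> 0\<close>] eventually_gt_at_top[of 0]
  proof eventually_elim
    case (elim s)
    then have "Q' s / Q s = of_real s ^ k * g s ^ m / g s ^ m'"
      by (auto simp: Q_def Q'_def g_def field_simps)
    also have "norm \<dots> = s ^ k * exp (- s) ^ m / exp (- s) ^ m'"
      using elim(3) by (simp add: g_def norm_mult norm_divide norm_power)
    also have "\<dots> = s ^ k * exp ((real m' - real m) * s)"
      by (simp add: exp_of_nat_mult[symmetric] exp_diff exp_minus field_simps)
    finally show ?case .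
  qed
  moreover have "((\<lambda>s. norm (Q' s / Q s)) \<longlongrightarrow> norm (c' m' / c m)) at_top"
    using \<open>c m \<noteq> 0\<close> by (intro tendsto_intros lim_Q lim_Q')
  ultimately have "((\<lambda>s. s ^ k * exp ((real m' - real m) * s)) \<longlongrightarrow> norm (c' m' / c m)) at_top"
    by (rule Lim_transform_eventually[rotated])
  then show False
    using power_mult_exp_not_tendsto[OF \<open>k > 0\<close>] \<open>c m \<noteq> 0\<close> \<open>c' m' \<noteq> 0\<close> by simp
qed

lemma pseries_eq_if_exp_neg_power_relation:
  assumes sc: "\<And>z. norm z < 1 \<Longrightarrow> summable (\<lambda>n. c n * z ^ n)"
    and sc': "\<And>z. norm z < 1 \<Longrightarrow> summable (\<lambda>n. c' n * z ^ n)"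
    and rel: "eventually (\<lambda>s::real. pseries c' (of_real (exp (- s)))
                                  = of_real s ^ k * pseries c (of_real (exp (- s)))) at_top"
  shows "c = c'"
proof (cases "k = 0")
  case True
  with rel show ?thesis
    by (intro pseries_eq_if_eventually_eq[OF sc sc' _ filterlim_of_real_exp_neg_at_top])
       (auto elim: eventually_mono)
next
  case False
  have c'_0: "c' = (\<lambda>_. 0)" if "c = (\<lambda>_. 0)"
    using rel that by (intro pseries_eq_0_if_exp_neg_eventually_0[OF sc'])
      (auto simp: pseries_def elim: eventually_mono)
  have c_0: "c = (\<lambda>_. 0)" if "c' = (\<lambda>_. 0)"
  proof (rule pseries_eq_0_if_exp_neg_eventually_0[OF sc])
    show "eventually (\<lambda>s. pseries c (of_real (exp (- s))) = 0) at_top"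
      using rel eventually_gt_at_top[of 0] unfolding that
      by eventually_elim (simp add: pseries_def)
  qed
  show ?thesis
    using nonzero_pseries_exp_neg_not_power_multiple[OF sc sc' _ _ _ rel] False c_0 c'_0 by auto
qed

lemma pseries_eq_if_exp_neg_log_relation_le:
  assumes sc: "\<And>z. norm z < 1 \<Longrightarrow> summable (\<lambda>n. c n * z ^ n)"
    and sc': "\<And>z. norm z < 1 \<Longrightarrow> summable (\<lambda>n. c' n * z ^ n)"
    and "\<nu>' \<le> \<nu>"
    and rel: "eventually (\<lambda>s::real. of_real s ^ \<nu> * pseries c (of_real (exp (- s)))
                                  = of_real s ^ \<nu>' * pseries c' (of_real (exp (- s)))) at_top"
  shows "c = c'"
proof (rule pseries_eq_if_exp_neg_power_relation[OF sc sc'])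
  show "eventually (\<lambda>s. pseries c' (of_real (exp (- s)))
                        = of_real s ^ (\<nu> - \<nu>') * pseries c (of_real (exp (- s)))) at_top"
    using rel eventually_gt_at_top[of 0]
  proof eventually_elim
    case (elim s)
    then have "of_real s ^ \<nu>' * (of_real s ^ (\<nu> - \<nu>') * pseries c (of_real (exp (- s))))
        = of_real s ^ \<nu>' * pseries c' (of_real (exp (- s)))"
      using \<open>\<nu>' \<le> \<nu>\<close> by (simp add: mult.assoc[symmetric] power_add[symmetric])
    then show ?case
      using elim(2) by simp
  qed
qed

lemma pseries_eq_if_exp_neg_log_relation:
  assumes sc: "\<And>z. norm z < 1 \<Longrightarrow> summable (\<lambda>n. c n * z ^ n)"
    and sc': "\<And>z. norm z < 1 \<Longrightarrow> summable (\<lambda>n. c' n * z ^ n)"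
    and rel: "eventually (\<lambda>s::real. of_real s ^ \<nu> * pseries c (of_real (exp (- s)))
                                  = of_real s ^ \<nu>' * pseries c' (of_real (exp (- s)))) at_top"
  shows "c = c'"
proof (cases "\<nu>' \<le> \<nu>")
  case True
  show ?thesis
    by (rule pseries_eq_if_exp_neg_log_relation_le[OF sc sc' True rel])
next
  case False
  from rel have "eventually (\<lambda>s::real. of_real s ^ \<nu>' * pseries c' (of_real (exp (- s)))
                                      = of_real s ^ \<nu> * pseries c (of_real (exp (- s)))) at_top"
    by (auto elim: eventually_mono)
  with sc' sc False have "c' = c"
    by (intro pseries_eq_if_exp_neg_log_relation_le) auto
  then show ?thesis ..
qed

lemma pseries_log_relation_continuation:
  assumes sc: "\<And>z. norm z < 1 \<Longrightarrow> summable (\<lambda>n. c n * z ^ n)"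
    and sc': "\<And>z. norm z < 1 \<Longrightarrow> summable (\<lambda>n. c' n * z ^ n)"
    and "\<rho> > 0"
    and rel: "\<And>r. 0 < r \<Longrightarrow> r < \<rho> \<Longrightarrow> of_real r ^ \<nu> * pseries c (of_real (exp (- r)))
                                         = of_real r ^ \<nu>' * pseries c' (of_real (exp (- r)))"
    and "s > 0"
  shows "of_real s ^ \<nu> * pseries c (of_real (exp (- s)))
         = of_real s ^ \<nu>' * pseries c' (of_real (exp (- s)))"
proof -
  define S where "S = ball (0::complex) 1 \<inter> {z. Re z > 0}"
  define f where "f z = (- Ln z) ^ \<nu> * pseries c z - (- Ln z) ^ \<nu>' * pseries c' z" for z
  define x where "x r = complex_of_real (exp (- r))" for r
  have x_in_S: "x r \<in> S" if "r > 0" for r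
    using that by (simp add: S_def x_def)
  have Ln_exp: "Ln (complex_of_real (exp (- r))) = - of_real r" for r
    by (simp add: Ln_of_real)
  have "f (x s) = 0"
  proof (rule analytic_continuation[of f S "x ` {0<..<\<rho>}" "x (\<rho> / 2)"])
    have "pseries c holomorphic_on S" and "pseries c' holomorphic_on S"
      using pseries_holomorphic[OF sc] pseries_holomorphic[OF sc']
      by (auto simp: S_def elim: holomorphic_on_subset)
    then show "f holomorphic_on S"
      unfolding f_def by (intro holomorphic_intros) (auto simp: S_def complex_nonpos_Reals_iff)
    show "open S"
      unfolding S_def by (intro open_Int open_halfspace_Re_gt) simp
    show "connected S"
      unfolding S_def by (intro convex_connected convex_Int convex_halfspace_Re_gt) simp
    show "x ` {0<..<\<rho>} \<subseteq> S" and "x (\<rho> / 2) \<in> S" and "x s \<in> S"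
      using x_in_S \<open>\<rho> > 0\<close> \<open>s > 0\<close> by auto
    show "x (\<rho> / 2) islimpt x ` {0<..<\<rho>}"
    proof (rule islimpt_isCont_image)
      show "\<rho> / 2 islimpt {0<..<\<rho>}"
        using \<open>\<rho> > 0\<close> by (intro open_imp_islimpt) auto
      show "isCont x (\<rho> / 2)"
        unfolding x_def by (intro continuous_intros)
      show "eventually (\<lambda>r. x r \<noteq> x (\<rho> / 2)) (at (\<rho> / 2))"
        by (auto simp: x_def eventually_at_filter)
    qed
    show "f z = 0" if "z \<in> x ` {0<..<\<rho>}" for z
      using that rel by (auto simp: f_def Ln_exp x_def)
  qed
  then show ?thesis
    by (simp add: f_def Ln_exp x_def)
qed

lemma tame_data_summable:
  assumes "tame_data c \<nu> A" and "norm z < 1"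
  shows "summable (\<lambda>n. c n * z ^ n)"
  using assms unfolding tame_data_def by blast

lemma tame_data_eq_pseries:
  assumes "tame_data c \<nu> A" and "z \<in> ball 0 1"
  shows "A z = pseries c z"
  using assms unfolding tame_data_def by blast

lemma tame_data_isCont_at_1:
  assumes "tame_data c \<nu> A"
  obtains L where "\<nu> = 0 \<or> L \<noteq> 0" and "isCont (\<lambda>z. if z = 1 then L else (z - 1) ^ \<nu> * A z) 1"
proof -
  obtain r L where "r > 0" and "\<nu> = 0 \<or> L \<noteq> 0"
    and hol: "(\<lambda>z. if z = 1 then L else (z - 1) ^ \<nu> * A z) holomorphic_on (ball 0 1 \<union> ball 1 r)"
    using assms unfolding tame_data_def by blast
  moreover have "isCont (\<lambda>z. if z = 1 then L else (z - 1) ^ \<nu> * A z) 1"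
    using holomorphic_on_imp_continuous_on[OF hol] \<open>r > 0\<close>
    by (subst (asm) continuous_on_eq_continuous_at) auto
  ultimately show ?thesis
    using that by blast
qed

lemma tame_data_pole_order_le:
  assumes d1: "tame_data c \<nu>1 A1" and d2: "tame_data c \<nu>2 A2"
  shows "\<nu>2 \<le> \<nu>1"
proof (rule ccontr)
  assume "\<not> \<nu>2 \<le> \<nu>1"
  obtain L1 where cont1: "isCont (\<lambda>z. if z = 1 then L1 else (z - 1) ^ \<nu>1 * A1 z) 1"
    using tame_data_isCont_at_1[OF d1] by blast
  obtain L2 where "\<nu>2 = 0 \<or> L2 \<noteq> 0"
    and cont2: "isCont (\<lambda>z. if z = 1 then L2 else (z - 1) ^ \<nu>2 * A2 z) 1"
    using tame_data_isCont_at_1[OF d2] by blast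
  with \<open>\<not> \<nu>2 \<le> \<nu>1\<close> have "L2 \<noteq> 0"
    by auto
  define F where "F = at (1::complex) within ball 0 1"
  have "F \<noteq> bot"
    unfolding F_def by (simp add: trivial_limit_within islimpt_ball)
  have "((\<lambda>z. (z - 1) ^ (\<nu>2 - \<nu>1) * (if z = 1 then L1 else (z - 1) ^ \<nu>1 * A1 z))
          \<longlongrightarrow> (1 - 1) ^ (\<nu>2 - \<nu>1) * L1) F"
    using cont1 unfolding F_def isCont_def
    by (intro tendsto_intros) (auto intro: tendsto_within_subset)
  moreover have "eventually (\<lambda>z. (z - 1) ^ (\<nu>2 - \<nu>1) * (if z = 1 then L1 else (z - 1) ^ \<nu>1 * A1 z)
                     = (if z = 1 then L2 else (z - 1) ^ \<nu>2 * A2 z)) F"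
    unfolding F_def eventually_at_filter
  proof (intro always_eventually allI impI)
    fix z :: complex
    assume "z \<noteq> 1" and "z \<in> ball 0 1"
    moreover have "(z - 1) ^ (\<nu>2 - \<nu>1) * (z - 1) ^ \<nu>1 = (z - 1) ^ \<nu>2"
      using \<open>\<not> \<nu>2 \<le> \<nu>1\<close> by (simp add: power_add[symmetric])
    ultimately show "(z - 1) ^ (\<nu>2 - \<nu>1) * (if z = 1 then L1 else (z - 1) ^ \<nu>1 * A1 z)
                     = (if z = 1 then L2 else (z - 1) ^ \<nu>2 * A2 z)"
      by (simp add: tame_data_eq_pseries[OF d1] tame_data_eq_pseries[OF d2] mult.assoc[symmetric])
  qed
  ultimately have "((\<lambda>z. if z = 1 then L2 else (z - 1) ^ \<nu>2 * A2 z)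
                      \<longlongrightarrow> (1 - 1) ^ (\<nu>2 - \<nu>1) * L1) F"
    by (rule Lim_transform_eventually)
  moreover have "(1 - 1) ^ (\<nu>2 - \<nu>1) * L1 = 0"
    using \<open>\<not> \<nu>2 \<le> \<nu>1\<close> by simp
  moreover have "((\<lambda>z. if z = 1 then L2 else (z - 1) ^ \<nu>2 * A2 z) \<longlongrightarrow> L2) F"
    using cont2 unfolding F_def isCont_def by (auto intro: tendsto_within_subset)
  ultimately show False
    using tendsto_unique[OF \<open>F \<noteq> bot\<close>] \<open>L2 \<noteq> 0\<close> by force
qed

lemma tame_data_pole_order_unique:
  assumes "tame_data c \<nu>1 A1" and "tame_data c \<nu>2 A2"
  shows "\<nu>1 = \<nu>2"
  using tame_data_pole_order_le[OF assms] tame_data_pole_order_le[OF assms(2,1)] by simp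

lemma holomorphic_exp_minus_1_quotient:
  "(\<lambda>u::complex. if u = 0 then 1 else (exp u - 1) / u) holomorphic_on UNIV"
proof (rule no_isolated_singularity'[where K = "{0}"])
  show "((\<lambda>u. if u = 0 then 1 else (exp u - 1) / u)
      \<longlongrightarrow> (if z = 0 then 1 else (exp z - 1) / z)) (at z within UNIV)"
    if "z \<in> {0}" for z :: complex
  proof -
    have "eventually (\<lambda>u. (exp u - 1) / u = (if u = 0 then 1 else (exp u - 1) / u)) (at (0::complex))"
      by (auto simp: eventually_at_filter)
    from Lim_transform_eventually[OF lim_exp_minus_1 this] show ?thesis
      using that by simp
  qed
  show "(\<lambda>u::complex. if u = 0 then 1 else (exp u - 1) / u) holomorphic_on (UNIV - {0})"
    by (rule holomorphic_transform[of "\<lambda>u. (exp u - 1) / u"]) (auto intro!: holomorphic_intros)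
qed auto

lemma tame_data_generating_function_holomorphic:
  assumes "tame_data c \<nu> A"
  obtains \<rho> F where "\<rho> > 0" and "F holomorphic_on ball 0 \<rho>"
    and "\<And>u. u \<in> ball 0 \<rho> - {0} \<Longrightarrow> F u = (- u) ^ \<nu> * A (exp u) * exp (of_real t * u)"
proof -
  obtain r L where "r > 0"
    and hol: "(\<lambda>z. if z = 1 then L else (z - 1) ^ \<nu> * A z) holomorphic_on (ball 0 1 \<union> ball 1 r)"
    using assms unfolding tame_data_def by blast
  define H where "H z = (if z = 1 then L else (z - 1) ^ \<nu> * A z)" for z
  define E where "E u = (if u = 0 then 1 else (exp u - 1) / u)" for u :: complex
  have hol_H: "H holomorphic_on ball 1 r"
    using hol unfolding H_def[abs_def] by (rule holomorphic_on_subset) auto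
  have hol_E: "E holomorphic_on UNIV"
    unfolding E_def[abs_def] by (rule holomorphic_exp_minus_1_quotient)
  have "open ({u::complex. E u \<noteq> 0} \<inter> exp -` ball 1 r)"
    using holomorphic_on_imp_continuous_on[OF hol_E]
    by (intro open_Int open_Collect_neq continuous_open_vimage) (auto intro: continuous_intros)
  moreover have "0 \<in> {u. E u \<noteq> 0} \<inter> exp -` ball 1 r"
    using \<open>r > 0\<close> by (simp add: E_def)
  ultimately obtain \<rho> where "\<rho> > 0" and \<rho>: "ball 0 \<rho> \<subseteq> {u. E u \<noteq> 0} \<inter> exp -` ball 1 r"
    by (meson open_contains_ball)
  text \<open>Off 0, \<open>(- u) ^ \<nu> * A (exp u) = (- u / (exp u - 1)) ^ \<nu> * ((exp u - 1) ^ \<nu> * A (exp u))\<close>,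
    and both factors are holomorphic at 0.\<close>
  define F where "F u = (- inverse (E u)) ^ \<nu> * H (exp u) * exp (of_real t * u)" for u
  show ?thesis
  proof (rule that[of \<rho> F])
    show "\<rho> > 0"
      by fact
    have "(H \<circ> exp) holomorphic_on ball 0 \<rho>"
      using \<rho> by (intro holomorphic_on_compose_gen[OF _ hol_H]) (auto intro: holomorphic_intros)
    then show "F holomorphic_on ball 0 \<rho>"
      using \<rho> unfolding F_def o_def
      by (intro holomorphic_intros holomorphic_on_subset[OF hol_E]) auto
    fix u :: complex
    assume u: "u \<in> ball 0 \<rho> - {0}"
    then have "E u = (exp u - 1) / u" and "exp u \<noteq> 1"
      using \<rho> by (auto simp: E_def)
    then have "(- inverse (E u)) ^ \<nu> * (exp u - 1) ^ \<nu> = (- u) ^ \<nu>"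
      using u by (simp add: power_mult_distrib[symmetric])
    with \<open>exp u \<noteq> 1\<close> show "F u = (- u) ^ \<nu> * A (exp u) * exp (of_real t * u)"
      by (simp add: F_def H_def mult.assoc[symmetric])
  qed
qed

lemma bernoulli_seq_exists:
  assumes "tame_data c \<nu> A"
  shows "\<exists>B. bernoulli_seq c t B"
proof -
  obtain \<rho> F where "\<rho> > 0" and hol: "F holomorphic_on ball 0 \<rho>"
    and F: "\<And>u. u \<in> ball 0 \<rho> - {0} \<Longrightarrow> F u = (- u) ^ \<nu> * A (exp u) * exp (of_real t * u)"
    using tame_data_generating_function_holomorphic[OF assms] by blast
  have "(\<lambda>n. (deriv ^^ n) F 0 * u ^ n / fact n) sums ((- u) ^ \<nu> * A (exp u) * exp (of_real t * u))"
    if "u \<in> ball 0 \<rho> - {0}" for u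
  proof -
    have "(\<lambda>n. (deriv ^^ n) F 0 / fact n * (u - 0) ^ n) sums F u"
      using that by (intro holomorphic_power_series[OF hol]) auto
    then show ?thesis
      using F[OF that] by (simp add: times_divide_eq_left)
  qed
  then have "bernoulli_seq c t (\<lambda>n. (deriv ^^ n) F 0)"
    using assms \<open>\<rho> > 0\<close> unfolding bernoulli_seq_def by blast
  then show ?thesis
    by blast
qed

lemma bernoulli_seq_on_negative_reals:
  assumes "bernoulli_seq c t B"
  obtains \<nu> A \<rho> where "tame_data c \<nu> A" and "\<rho> > 0"
    and "\<And>s. 0 < s \<Longrightarrow> s < \<rho> \<Longrightarrow> (\<lambda>n. B n / fact n * (- of_real s) ^ n) sums
           (of_real s ^ \<nu> * pseries c (of_real (exp (- s))) * of_real (exp (- t * s)))"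
proof -
  obtain \<nu> A \<rho> where d: "tame_data c \<nu> A" and "\<rho> > 0"
    and sums: "\<And>u. u \<in> ball 0 \<rho> - {0} \<Longrightarrow>
      (\<lambda>n. B n * u ^ n / fact n) sums ((- u) ^ \<nu> * A (exp u) * exp (of_real t * u))"
    using assms unfolding bernoulli_seq_def by blast
  show ?thesis
  proof (rule that[OF d \<open>\<rho> > 0\<close>])
    fix s :: real
    assume "0 < s" and "s < \<rho>"
    then have "(\<lambda>n. B n * (- of_real s) ^ n / fact n) sums
        ((- (- of_real s)) ^ \<nu> * A (exp (- of_real s)) * exp (of_real t * (- of_real s)))"
      by (intro sums) simp
    moreover have "exp (- complex_of_real s) = of_real (exp (- s))"
      and "exp (of_real t * (- of_real s)) = complex_of_real (exp (- t * s))"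
      by (simp_all flip: exp_of_real)
    moreover have "A (of_real (exp (- s))) = pseries c (of_real (exp (- s)))"
      using tame_data_eq_pseries[OF d] \<open>0 < s\<close> by simp
    ultimately show "(\<lambda>n. B n / fact n * (- of_real s) ^ n) sums
           (of_real s ^ \<nu> * pseries c (of_real (exp (- s))) * of_real (exp (- t * s)))"
      by (simp only: times_divide_eq_left minus_minus)
  qed
qed

lemma bernoulli_seq_unique:
  assumes "bernoulli_seq c t B1" and "bernoulli_seq c t B2"
  shows "B1 = B2"
proof -
  obtain \<nu>1 A1 \<rho>1 where d1: "tame_data c \<nu>1 A1" and "\<rho>1 > 0"
    and sums1: "\<And>s. 0 < s \<Longrightarrow> s < \<rho>1 \<Longrightarrow> (\<lambda>n. B1 n / fact n * (- of_real s) ^ n) sums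
           (of_real s ^ \<nu>1 * pseries c (of_real (exp (- s))) * of_real (exp (- t * s)))"
    using bernoulli_seq_on_negative_reals[OF assms(1)] by blast
  obtain \<nu>2 A2 \<rho>2 where d2: "tame_data c \<nu>2 A2" and "\<rho>2 > 0"
    and sums2: "\<And>s. 0 < s \<Longrightarrow> s < \<rho>2 \<Longrightarrow> (\<lambda>n. B2 n / fact n * (- of_real s) ^ n) sums
           (of_real s ^ \<nu>2 * pseries c (of_real (exp (- s))) * of_real (exp (- t * s)))"
    using bernoulli_seq_on_negative_reals[OF assms(2)] by blast
  have "\<nu>1 = \<nu>2"
    by (rule tame_data_pole_order_unique[OF d1 d2])
  define \<rho> where "\<rho> = min \<rho>1 \<rho>2"
  have "\<rho> > 0"
    using \<open>\<rho>1 > 0\<close> \<open>\<rho>2 > 0\<close> by (simp add: \<rho>_def)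
  have "(\<lambda>n. B1 n / fact n) = (\<lambda>n. B2 n / fact n)"
  proof (rule powser_eq_if_eventually_eq[where w = "- of_real (\<rho> / 2)" and F = "at_right 0"])
    show "summable (\<lambda>n. B1 n / fact n * (- of_real (\<rho> / 2)) ^ n)"
      and "summable (\<lambda>n. B2 n / fact n * (- of_real (\<rho> / 2)) ^ n)"
      using sums1[of "\<rho> / 2"] sums2[of "\<rho> / 2"] \<open>\<rho> > 0\<close> by (auto simp: \<rho>_def sums_iff)
    show "filterlim (\<lambda>s. - complex_of_real s) (at 0) (at_right 0)"
      by (rule filterlim_atI) (auto intro!: tendsto_eq_intros simp: eventually_at_filter)
    show "eventually (\<lambda>s::real. (\<Sum>n. B1 n / fact n * (- of_real s) ^ n)
                          = (\<Sum>n. B2 n / fact n * (- of_real s) ^ n)) (at_right 0)"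
      using eventually_at_right_real[OF \<open>\<rho> > 0\<close>]
    proof eventually_elim
      case (elim s)
      then show ?case
        using sums_unique[OF sums1, of s] sums_unique[OF sums2, of s] \<open>\<nu>1 = \<nu>2\<close>
        by (simp add: \<rho>_def)
    qed
  qed (use \<open>\<rho> > 0\<close> in auto)
  then show ?thesis
    by (simp add: fun_eq_iff)
qed

lemma bernoulli_poly_bernoulli_seq:
  assumes "tame c"
  shows "bernoulli_seq c t (\<lambda>n. bernoulli_poly c n t)"
proof -
  obtain \<nu> A where "tame_data c \<nu> A"
    using assms unfolding tame_def by blast
  then obtain B where "bernoulli_seq c t B"
    using bernoulli_seq_exists by blast
  then have "bernoulli_seq c t (THE B. bernoulli_seq c t B)"
    using theI[of "bernoulli_seq c t"] bernoulli_seq_unique by blast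
  then show ?thesis
    by (simp add: bernoulli_poly_def)
qed

lemma bernoulli_seq_determines_coeffs:
  assumes "bernoulli_seq c t B" and "bernoulli_seq c' t B"
  shows "c = c'"
proof -
  obtain \<nu> A \<rho> where d: "tame_data c \<nu> A" and "\<rho> > 0"
    and sums: "\<And>s. 0 < s \<Longrightarrow> s < \<rho> \<Longrightarrow> (\<lambda>n. B n / fact n * (- of_real s) ^ n) sums
           (of_real s ^ \<nu> * pseries c (of_real (exp (- s))) * of_real (exp (- t * s)))"
    using bernoulli_seq_on_negative_reals[OF assms(1)] by blast
  obtain \<nu>' A' \<rho>' where d': "tame_data c' \<nu>' A'" and "\<rho>' > 0"
    and sums': "\<And>s. 0 < s \<Longrightarrow> s < \<rho>' \<Longrightarrow> (\<lambda>n. B n / fact n * (- of_real s) ^ n) sums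
           (of_real s ^ \<nu>' * pseries c' (of_real (exp (- s))) * of_real (exp (- t * s)))"
    using bernoulli_seq_on_negative_reals[OF assms(2)] by blast
  note sc = tame_data_summable[OF d] and sc' = tame_data_summable[OF d']
  define \<delta> where "\<delta> = min \<rho> \<rho>'"
  have "\<delta> > 0"
    using \<open>\<rho> > 0\<close> \<open>\<rho>' > 0\<close> by (simp add: \<delta>_def)
  have rel: "of_real s ^ \<nu> * pseries c (of_real (exp (- s)))
             = of_real s ^ \<nu>' * pseries c' (of_real (exp (- s)))"
    if "0 < s" and "s < \<delta>" for s
    using sums_unique2[OF sums sums'] that by (simp add: \<delta>_def)
  have "eventually (\<lambda>s::real. of_real s ^ \<nu> * pseries c (of_real (exp (- s)))
                        = of_real s ^ \<nu>' * pseries c' (of_real (exp (- s)))) at_top"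
    using eventually_gt_at_top[of 0]
    by eventually_elim (rule pseries_log_relation_continuation[OF sc sc' \<open>\<delta> > 0\<close> rel])
  then show ?thesis
    using pseries_eq_if_exp_neg_log_relation[OF sc sc'] by blast
qed

theorem mainTheorem7:
  fixes t0 :: real and c c' :: "nat \<Rightarrow> complex"
  assumes "t0 > 0" and "tame c" and "tame c'"
    and "\<forall>n. bernoulli_poly c n t0 = bernoulli_poly c' n t0"
  shows "c = c'"
proof (rule bernoulli_seq_determines_coeffs)
  show "bernoulli_seq c t0 (\<lambda>n. bernoulli_poly c n t0)"
    using assms(2) by (rule bernoulli_poly_bernoulli_seq)
  show "bernoulli_seq c' t0 (\<lambda>n. bernoulli_poly c n t0)"
    using bernoulli_poly_bernoulli_seq[OF assms(3)] assms(4) by simp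
qed

end
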